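(* For $n,s\in\mathbb{N}$, $$\overline{H}_n(s)=\sum_{k=1}^n(-1)^{k-1}\binom{n}{k}\,{}_{s+1}F_s\left(\{\tfrac12\}^{s},1-k;\{\tfrac32\}^{s};1\right).$$
   Context: $\mathbb{N}$ is the set of positive integers; $\overline{H}_n(s)=\sum_{k=0}^{n-1}\frac{1}{(2k+1)^s}$; $\{a\}^s$ denotes $a$ repeated $s$ times. ${}_{s+1}F_s(a_1,\ldots,a_{s+1};b_1,\ldots,b_s;x)=\sum_{i\geq 0}\frac{(a_1)_i\cdots(a_{s+1})_i}{(b_1)_i\cdots(b_s)_i}\frac{x^i}{i!}$, with $(a)_0=1$, $(a)_i=a(a+1)\cdots(a+i-1)$ for $i>0$ (a finite sum here since $1-k\leq 0$ is an integer). *)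

theory Defs
  imports "HOL-Analysis.Analysis"
begin

definition oddH :: "nat \<Rightarrow> nat \<Rightarrow> real" where
  "oddH n s = (\<Sum>k<n. 1 / (2 * real k + 1) ^ s)"

definition hypergeom :: "real list \<Rightarrow> real list \<Rightarrow> real \<Rightarrow> real" where
  "hypergeom as bs x =
     (\<Sum>i. (\<Prod>a\<leftarrow>as. pochhammer a i) / (\<Prod>b\<leftarrow>bs. pochhammer b i) * x ^ i / fact i)"

end

theory Submission imports Defs begin

text \<open>Since the upper parameter \<open>1 - k\<close> is a non-positive integer, the hypergeometric series
  terminates, and its \<open>i\<close>-th term is \<open>(-1)^i C(k-1,i) / (2i+1)^s\<close>, because
  \<open>(1/2)\<^sub>i / (3/2)\<^sub>i = 1/(2i+1)\<close>. After exchanging the two finite sums, the coefficient of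
  \<open>1/(2i+1)^s\<close> is \<open>\<Sum>\<^sub>k (-1)^(k-1+i) C(n,k) C(k-1,i)\<close>. By Pascal's rule this reduces to the
  orthogonality relation \<open>\<Sum>\<^sub>j (-1)^(i+j) C(n,j) C(j,i) = \<delta>\<^sub>i\<^sub>n\<close> of binomial inversion, and it
  equals \<open>1\<close> for every \<open>i < n\<close>.\<close>

lemma sum_alternating_choose_mult_choose:
  "(\<Sum>j\<le>n. (-1)^(i+j) * of_nat (n choose j) * of_nat (j choose i) :: 'a::comm_ring_1)
     = (if i = n then 1 else 0)"
proof (cases "i \<le> n")
  case False
  then show ?thesis by (auto simp: binomial_eq_0 intro!: sum.neutral)
next
  case True
  let ?f = "\<lambda>j. (-1)^(i+j) * of_nat (n choose j) * of_nat (j choose i) :: 'a"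
  have "(\<Sum>j\<le>n. ?f j) = (\<Sum>j=i..n. ?f j)"
    by (rule sum.mono_neutral_right) (auto simp: not_le binomial_eq_0)
  also have "\<dots> = (\<Sum>m=0..n-i. ?f (i+m))"
    using sum.atLeastAtMost_shift_0[OF True, of ?f] by (simp add: comp_def)
  also have "\<dots> = of_nat (n choose i) * (\<Sum>m\<le>n-i. (-1)^m * of_nat ((n-i) choose m))"
    unfolding sum_distrib_left atLeast0AtMost
  proof (rule sum.cong)
    fix m assume "m \<in> {..n-i}"
    then have "(n choose (i+m)) * ((i+m) choose i) = (n choose i) * ((n-i) choose m)"
      using choose_mult[of i "i+m" n] True by auto
    moreover have "(-1::'a)^(i+(i+m)) = (-1)^m"
      by (simp add: power_add flip: power_mult_distrib)
    ultimately show "?f (i+m) = of_nat (n choose i) * ((-1)^m * of_nat ((n-i) choose m))"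
      by (metis (no_types, lifting) mult.assoc mult.left_commute of_nat_mult)
  qed simp
  also have "\<dots> = (if i = n then 1 else 0)"
    using choose_alternating_sum[of "n - i", where 'a='a] True by auto
  finally show ?thesis .
qed

lemma sum_alternating_choose_Suc_mult_choose:
  "(\<Sum>j<n. (-1)^(i+j) * of_nat (n choose Suc j) * of_nat (j choose i) :: 'a::comm_ring_1)
     = (if i < n then 1 else 0)"
proof (induction n)
  case 0
  then show ?case by simp
next
  case (Suc n)
  let ?S = "\<lambda>c. (\<Sum>j<Suc n. (-1)^(i+j) * of_nat (c j) * of_nat (j choose i) :: 'a)"
  have "?S (\<lambda>j. Suc n choose Suc j) = ?S (\<lambda>j. n choose j) + ?S (\<lambda>j. n choose Suc j)"
    by (simp add: sum.distrib algebra_simps)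
  also have "?S (\<lambda>j. n choose j) = (if i = n then 1 else 0)"
    using sum_alternating_choose_mult_choose[of i n] by (simp add: lessThan_Suc_atMost)
  also have "?S (\<lambda>j. n choose Suc j) = (if i < n then 1 else 0)"
    using Suc.IH by (simp add: binomial_eq_0)
  finally show ?case by auto
qed

lemma sum_alternating_choose_mult_binomial_transform:
  fixes a :: "nat \<Rightarrow> 'a::comm_ring_1"
  shows "(\<Sum>k=1..n. (-1)^(k-1) * of_nat (n choose k) *
            (\<Sum>i\<le>k-1. (-1)^i * of_nat ((k-1) choose i) * a i)) = (\<Sum>i<n. a i)"
proof -
  have "(\<Sum>k=1..n. (-1)^(k-1) * of_nat (n choose k) *
            (\<Sum>i\<le>k-1. (-1)^i * of_nat ((k-1) choose i) * a i))
      = (\<Sum>j<n. (-1)^j * of_nat (n choose Suc j) * (\<Sum>i\<le>j. (-1)^i * of_nat (j choose i) * a i))"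
    unfolding image_Suc_lessThan[symmetric] by (simp add: sum.reindex)
  also have "\<dots> = (\<Sum>j<n. \<Sum>i<n. a i * ((-1)^(i+j) * of_nat (n choose Suc j) * of_nat (j choose i)))"
  proof (rule sum.cong[OF refl])
    fix j assume "j \<in> {..<n}"
    then have "(\<Sum>i\<le>j. (-1)^i * of_nat (j choose i) * a i)
        = (\<Sum>i<n. (-1)^i * of_nat (j choose i) * a i)"
      by (intro sum.mono_neutral_left) (auto simp: not_le binomial_eq_0)
    then show "(-1)^j * of_nat (n choose Suc j) * (\<Sum>i\<le>j. (-1)^i * of_nat (j choose i) * a i)
        = (\<Sum>i<n. a i * ((-1)^(i+j) * of_nat (n choose Suc j) * of_nat (j choose i)))"
      by (simp add: sum_distrib_left power_add mult_ac)
  qed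
  also have "\<dots> = (\<Sum>i<n. a i * (\<Sum>j<n. (-1)^(i+j) * of_nat (n choose Suc j) * of_nat (j choose i)))"
    by (subst sum.swap) (simp add: sum_distrib_left)
  also have "\<dots> = (\<Sum>i<n. a i)"
    by (simp add: sum_alternating_choose_Suc_mult_choose)
  finally show ?thesis .
qed

lemma pochhammer_div_pochhammer_plus_one:
  fixes a :: real
  assumes "a > 0"
  shows "pochhammer a i / pochhammer (a + 1) i = a / (a + real i)"
proof -
  have "pochhammer a i * (a + real i) = a * pochhammer (a + 1) i"
    by (metis pochhammer_Suc pochhammer_rec)
  moreover have "pochhammer (a + 1) i > 0" "a + real i > 0"
    using assms by (simp_all add: pochhammer_pos)
  ultimately show ?thesis
    by (simp add: field_simps)
qed

lemma pochhammer_minus_of_nat_div_fact: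
  "pochhammer (- of_nat m) i / fact i = ((-1)^i * of_nat (m choose i) :: 'a::field_char_0)"
  by (simp add: binomial_gbinomial gbinomial_pochhammer)

lemma hypergeom_halves_minus_of_nat:
  "hypergeom (replicate s (1/2) @ [- real m]) (replicate s (3/2)) 1
     = (\<Sum>i\<le>m. (-1)^i * real (m choose i) / (2 * real i + 1) ^ s)"
proof -
  have half_ratio: "pochhammer (1/2) i / pochhammer (3/2) i = 1 / (2 * real i + 1)" for i
    using pochhammer_div_pochhammer_plus_one[of "1/2" i] by (simp add: field_simps)
  have term_eq: "(\<Prod>a\<leftarrow>replicate s (1/2) @ [- real m]. pochhammer a i) /
      (\<Prod>b\<leftarrow>replicate s (3/2). pochhammer b i) * 1 ^ i / fact i
      = (-1)^i * real (m choose i) / (2 * real i + 1) ^ s" for i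
  proof -
    have "(\<Prod>a\<leftarrow>replicate s (1/2) @ [- real m]. pochhammer a i) /
        (\<Prod>b\<leftarrow>replicate s (3/2). pochhammer b i) * 1 ^ i / fact i
        = (pochhammer (1/2) i / pochhammer (3/2) i) ^ s * (pochhammer (- real m) i / fact i)"
      by (simp add: power_divide)
    then show ?thesis
      by (simp add: half_ratio pochhammer_minus_of_nat_div_fact power_divide)
  qed
  show ?thesis
    unfolding hypergeom_def term_eq
    by (rule suminf_finite) auto
qed

theorem corollary3p2:
  fixes n s :: nat
  assumes "n \<ge> 1" and "s \<ge> 1"
  shows "oddH n s =
    (\<Sum>k=1..n. (-1) ^ (k - 1) * real (n choose k) *
       hypergeom (replicate s (1/2) @ [1 - real k]) (replicate s (3/2)) 1)"
proof -
  have "hypergeom (replicate s (1/2) @ [1 - real k]) (replicate s (3/2)) 1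
      = (\<Sum>i\<le>k-1. (-1)^i * real ((k-1) choose i) * (1 / (2 * real i + 1) ^ s))"
    if "k \<in> {1..n}" for k
    using that hypergeom_halves_minus_of_nat[of s "k - 1"] by (simp add: of_nat_diff)
  then have "(\<Sum>k=1..n. (-1) ^ (k - 1) * real (n choose k) *
       hypergeom (replicate s (1/2) @ [1 - real k]) (replicate s (3/2)) 1)
      = (\<Sum>k=1..n. (-1) ^ (k - 1) * real (n choose k) *
       (\<Sum>i\<le>k-1. (-1)^i * real ((k-1) choose i) * (1 / (2 * real i + 1) ^ s)))"
    by (intro sum.cong) auto
  then show ?thesis
    unfolding oddH_def sum_alternating_choose_mult_binomial_transform by simp
qed

end
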